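(* Let $\beta\ge0.8218$ be a real number, and let $Z>0$ and $N>0$ be real numbers with $N/Z<7/3$. Then $$\beta^{-1}Z+3Z^{1/3}>\min\left\{N,\ Z\,\frac{1+0.68\,N^{-2/3}}{\beta-3(\beta/6)^{1/3}N^{-2/3}}\right\}.$$ *)

theory Defs
  imports Complex_Main
begin

end

theory Submission
  imports Defs
begin

text \<open>Write Z = a^3, N = n^3, \<beta> = b^3, 6 = k^3 and L = Z/\<beta> + 3 Z^(1/3). The claim is
  trivial unless L \<le> N and the denominator D of the second term is positive. Then
  n^2 (L D - Z (1 + 0.68/n^2)) = 3 a b^3 n^2 - (3b/k) L - 0.68 a^3, and replacing L by the
  larger n^3 bounds this from below by a^3/k times the cubic form 3 k b^3 m^2 - 3 b m^3 - 0.68 k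
  in m = n/a. The hypotheses confine (b, m) to b \<ge> 0.9366, b m \<ge> 1 (from Z/\<beta> < L \<le> N) and
  m \<le> 1.3264 (from N/Z < 7/3), where the form is positive: for m \<le> 1.05 because b m \<ge> 1, and
  for larger m because it increases in b and is positive at b = 0.9366.\<close>

lemma cube_powr_one_third: "x \<ge> 0 \<Longrightarrow> (x powr (1/3)) ^ 3 = (x::real)"
  using real_root_pow_pos2[of 3 x] by (simp add: root_powr_inverse)

lemma powr_minus_two_thirds: "x > 0 \<Longrightarrow> x powr (-(2/3)) = 1 / (x powr (1/3)) ^ 2"
  for x :: real
  by (simp add: powr_minus_divide powr_power)

lemma cubic_form_pos_small_ratio:
  fixes b m :: real
  assumes b: "b \<ge> 0.9366" and bm: "b * m \<ge> 1" and m: "0 < m" "m \<le> 1.05"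
  shows "3*1.817*b^3*m^2 - 3*b*m^3 - 0.68*1.817 > 0"
proof -
  have "b^2 \<ge> 0.9366^2" using b by (intro power_mono) auto
  then have nonneg: "3*1.817*b^2 - 3*m \<ge> 0" using m by (simp add: power2_eq_square)
  have "3*1.817*b - 3*m^2 \<le> 3*1.817*b*(b*m) - 3*m^2"
    using bm b by simp
  also have "\<dots> = m*(3*1.817*b^2 - 3*m)"
    by (simp add: algebra_simps power2_eq_square)
  also have "\<dots> \<le> (b*m) * (m*(3*1.817*b^2 - 3*m))"
    using mult_right_mono[OF bm, of "m*(3*1.817*b^2 - 3*m)"] nonneg m by simp
  also have "\<dots> = 3*1.817*b^3*m^2 - 3*b*m^3"
    by (simp add: algebra_simps power2_eq_square power3_eq_cube)
  finally have "3*1.817*b^3*m^2 - 3*b*m^3 \<ge> 3*1.817*b - 3*m^2" .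
  moreover have "m^2 \<le> 1.1025"
    using power_mono[OF m(2), of 2] m by (simp add: power2_eq_square)
  ultimately show ?thesis using b by simp
qed

lemma cubic_form_pos_large_ratio:
  fixes b m :: real
  assumes b: "b \<ge> 0.9366" and m: "1.05 \<le> m" "m \<le> 1.3264"
  shows "3*1.817*b^3*m^2 - 3*b*m^3 - 0.68*1.817 > 0"
proof -
  define b0 :: real where "b0 = 0.9366"
  have "b^2 + b*b0 + b0^2 \<ge> 3*b0^2"
    using b mult_right_mono[OF b, of b0] power_mono[OF b, of 2]
    by (simp add: b0_def power2_eq_square)
  then have "1.817*(b^2 + b*b0 + b0^2) \<ge> m"
    using m by (simp add: b0_def power2_eq_square)
  then have "(b - b0) * (3*m^2*(1.817*(b^2 + b*b0 + b0^2) - m)) \<ge> 0"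
    using b by (simp add: b0_def)
  moreover have "(3*1.817*b^3*m^2 - 3*b*m^3) - (3*1.817*b0^3*m^2 - 3*b0*m^3)
      = (b - b0) * (3*m^2*(1.817*(b^2 + b*b0 + b0^2) - m))"
    by algebra
  ultimately have "3*1.817*b^3*m^2 - 3*b*m^3 \<ge> 3*1.817*b0^3*m^2 - 3*b0*m^3"
    by linarith
  moreover have "3*1.817*b0^3*m^2 - 3*b0*m^3 - 0.68*1.817 > 0"
  proof -
    txt \<open>At \<open>b = 0.9366\<close> the form exceeds a positive multiple of this cubic, which is
      nonnegative on the interval.\<close>
    have "(m - 1.05)*(1.3264 - m)*(m + 0.78) \<ge> 0" using m by simp
    moreover have "(m - 1.05)*(1.3264 - m)*(m + 0.78) = -(m*m*m) + (2.3764 - 0.78)*(m*m)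
        + (2.3764*0.78 - 1.05*1.3264)*m - 1.05*1.3264*0.78"
      by algebra
    moreover have "m*m \<le> 1.3264*1.3264" using m by (intro mult_mono) auto
    ultimately show ?thesis using m
      by (simp add: b0_def power2_eq_square power3_eq_cube)
  qed
  ultimately show ?thesis by linarith
qed

lemma cubic_form_pos:
  fixes b m k :: real
  assumes b: "b \<ge> 0.9366" and bm: "b * m \<ge> 1" and m: "0 < m" "m \<le> 1.3264"
    and k: "k \<ge> 1.817"
  shows "3*k*b^3*m^2 - 3*b*m^3 - 0.68*k > 0"
proof -
  have "b^3*m^2 = b * (b*m)^2" by algebra
  also have "\<dots> \<ge> b" using b mult_left_mono[OF one_le_power[OF bm, of 2], of b] by simp
  finally have "3*b^3*m^2 - 0.68 \<ge> 0" using b by simp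
  then have "k*(3*b^3*m^2 - 0.68) \<ge> 1.817*(3*b^3*m^2 - 0.68)"
    using k by (intro mult_right_mono)
  moreover have "3*1.817*b^3*m^2 - 3*b*m^3 - 0.68*1.817 > 0"
    using cubic_form_pos_small_ratio[OF b bm m(1)] cubic_form_pos_large_ratio[OF b _ m(2)]
    by (cases "m \<le> 1.05") auto
  ultimately show ?thesis by (simp add: algebra_simps)
qed

lemma lemma5_in_cube_roots:
  fixes a n b k :: real
  assumes a: "a > 0" and n: "n > 0" and b: "b \<ge> 0.9366" and k: "k \<ge> 1.817"
    and ratio: "n \<le> 1.3264 * a"
  shows "a^3/b^3 + 3*a > min (n^3) (a^3*(1 + 0.68/n^2) / (b^3 - 3*(b/k)/n^2))"
    (is "?L > min _ (_ / ?D)")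
proof (cases "?L \<le> n^3")
  case False
  then show ?thesis by simp
next
  case le: True
  have "b > 0" "k > 0" using b k by simp_all
  then have L_pos: "?L > 0" using a by (intro add_pos_pos) simp_all
  show ?thesis
  proof (cases "?D > 0")
    case False
    then have "a^3*(1 + 0.68/n^2) / ?D \<le> 0"
      using a n by (intro divide_nonneg_nonpos) auto
    then show ?thesis using L_pos by linarith
  next
    case D: True
    define m where "m = n / a"
    have m: "0 < m" "m \<le> 1.3264" using a n ratio by (auto simp: m_def divide_le_eq)
    have "(a/b)^3 < n^3" using le a by (simp add: power_divide)
    then have "a/b < n" using power_less_imp_less_base n less_imp_le by blast
    then have bm: "b * m \<ge> 1" using a b by (simp add: m_def field_simps)
    have "0 < (a^3/k) * (3*k*b^3*m^2 - 3*b*m^3 - 0.68*k)"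
      using cubic_form_pos[OF b bm m k] a \<open>k > 0\<close> by simp
    also have "\<dots> = 3*a*b^3*n^2 - (3*b/k)*n^3 - 0.68*a^3"
      using a \<open>k > 0\<close> by (simp add: m_def field_simps power2_eq_square power3_eq_cube)
    also have "\<dots> \<le> 3*a*b^3*n^2 - (3*b/k)*?L - 0.68*a^3"
      using le \<open>b > 0\<close> \<open>k > 0\<close> by (intro diff_right_mono diff_left_mono mult_left_mono) auto
    also have "\<dots> = n^2 * (?L * ?D - a^3*(1 + 0.68/n^2))"
      using n \<open>b > 0\<close> \<open>k > 0\<close> by (simp add: field_simps power2_eq_square power3_eq_cube)
    finally have "?L * ?D - a^3*(1 + 0.68/n^2) > 0"
      by (simp add: zero_less_mult_iff)
    then have "a^3*(1 + 0.68/n^2) / ?D < ?L"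
      using D by (simp only: divide_less_eq) simp
    then show ?thesis by linarith
  qed
qed

theorem lemma5:
  fixes \<beta> Z N :: real
  assumes "\<beta> \<ge> 0.8218" and "Z > 0" and "N > 0" and "N / Z < 7 / 3"
  shows "Z / \<beta> + 3 * Z powr (1/3) >
    min N (Z * (1 + 0.68 * N powr (-(2/3))) / (\<beta> - 3 * (\<beta> / 6) powr (1/3) * N powr (-(2/3))))"
proof -
  define a b n k where "a = Z powr (1/3)" "b = \<beta> powr (1/3)" "n = N powr (1/3)"
    "k = (6::real) powr (1/3)"
  have cubes: "Z = a^3" "\<beta> = b^3" "N = n^3" "k^3 = 6"
    using assms by (simp_all add: a_b_n_k_def cube_powr_one_third)
  have pos: "a > 0" "n > 0" "b \<ge> 0" "k \<ge> 0"
    using assms by (simp_all add: a_b_n_k_def)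
  have "N < 7/3 * Z" using assms by (simp add: divide_less_eq)
  also have "7/3 * Z < 1.3264^3 * Z"
    using assms(2) by (intro mult_strict_right_mono) (simp_all add: power_divide)
  finally have "n^3 < (1.3264 * a)^3" using cubes by (simp only: power_mult_distrib)
  then have n_bound: "n < 1.3264 * a"
    by (rule power_less_imp_less_base) (simp add: less_imp_le[OF pos(1)])
  have "0.9366^3 \<le> b^3" using assms cubes by (simp add: power_divide)
  then have b_bound: "b \<ge> 0.9366" using power_mono_iff[of "0.9366" b 3] pos by simp
  have "1.817^3 \<le> k^3" using cubes by (simp add: power_divide)
  then have k_bound: "k \<ge> 1.817" using power_mono_iff[of "1.817" k 3] pos by simp
  have "a^3/b^3 + 3*a > min (n^3) (a^3*(1 + 0.68/n^2) / (b^3 - 3*(b/k)/n^2))"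
    using lemma5_in_cube_roots[OF pos(1,2) b_bound k_bound less_imp_le[OF n_bound]] .
  moreover have "Z powr (1/3) = a" "N powr (-(2/3)) = 1/n^2" "(\<beta>/6) powr (1/3) = b/k"
    using assms by (simp_all add: a_b_n_k_def powr_minus_two_thirds powr_divide)
  ultimately show ?thesis
    by (simp add: cubes(1-3))
qed

end
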